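(* Let $d\geq 1$ be an integer and let $e_0,\dots,e_{d-1}$ be the standard basis of $\mathbb{C}^d$; write $\mathcal{B}^0=\{e_0,\dots,e_{d-1}\}$. Let $(p_n)_{n=0}^\infty$ be a sequence of orthogonal polynomials, i.e. each $p_n$ is a real polynomial of degree exactly $n$ and there is a positive weight function $w$ on $\mathbb{R}$ with $\int_{-\infty}^{\infty}p_j(x)p_i(x)w(x)\,dx=\delta_{ij}$ for all $i,j$. Let $x_0,\dots,x_{d-1}$ be the (real, distinct) zeros of $p_d$ and $y_0,\dots,y_{d-2}$ the (real, distinct) zeros of $p_{d-1}$ (there are none if $d=1$). Fix $\alpha\in\mathbb{R}$ such that $e^{ij\alpha}\notin\mathbb{R}$ for all $j\in\{1,\dots,d-1\}$. For $j=0,\dots,d-1$ define $$v^1_j=\big(p_0(x_j),p_1(x_j),\dots,p_{d-1}(x_j)\big),\qquad v^2_j=\big(p_0(x_j),e^{i\alpha}p_1(x_j),\dots,e^{i(d-1)\alpha}p_{d-1}(x_j)\big),$$ for $j=0,\dots,d-2$ define $$v^3_j=\big(p_0(y_j),p_1(y_j),\dots,p_{d-2}(y_j),0\big),\qquad v^4_j=\big(p_0(y_j),e^{i\alpha}p_1(y_j),\dots,e^{i(d-2)\alpha}p_{d-2}(y_j),0\big),$$ and set $v^3_{d-1}=v^4_{d-1}=e_{d-1}$. For $\ell=1,2,3,4$ let $\mathcal{B}^\ell=\{v^\ell_j/\|v^\ell_j\| : j=0,\dots,d-1\}$ (these are orthonormal bases of $\mathbb{C}^d$). Then the five orthonormal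 bases $\mathcal{B}^0,\dots,\mathcal{B}^4$ determine any pure state among all states: for every unit vector $\psi\in\mathbb{C}^d$ and every density matrix $\varrho$ on $\mathbb{C}^d$, if $|\langle v\mid\psi\rangle|^2=\langle v\mid \varrho\, v\rangle$ for every $v\in\mathcal{B}^0\cup\mathcal{B}^1\cup\mathcal{B}^2\cup\mathcal{B}^3\cup\mathcal{B}^4$, then $\varrho=|\psi\rangle\langle\psi|$.
   Context: A density matrix (state) is a positive semidefinite $d\times d$ complex matrix of trace one; a pure state is one of the form $|\psi\rangle\langle\psi|$ with $\psi$ a unit vector. The inner product $\langle\cdot\mid\cdot\rangle$ on $\mathbb{C}^d$ is linear in the second argument. *)

theory Defs
  imports "HOL-Analysis.Analysis" "HOL-Computational_Algebra.Polynomial"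
begin

text \<open>Vectors in C^d are represented as functions nat => complex, only the
coordinates 0..d-1 being relevant; d x d matrices as nat => nat => complex.\<close>

definition cinner :: "nat \<Rightarrow> (nat \<Rightarrow> complex) \<Rightarrow> (nat \<Rightarrow> complex) \<Rightarrow> complex" where
  "cinner d u v = (\<Sum>k<d. cnj (u k) * v k)"

definition cvnorm :: "nat \<Rightarrow> (nat \<Rightarrow> complex) \<Rightarrow> real" where
  "cvnorm d v = sqrt (\<Sum>k<d. (cmod (v k))\<^sup>2)"

definition matvec :: "nat \<Rightarrow> (nat \<Rightarrow> nat \<Rightarrow> complex) \<Rightarrow> (nat \<Rightarrow> complex) \<Rightarrow> (nat \<Rightarrow> complex)" where
  "matvec d A v = (\<lambda>k. \<Sum>l<d. A k l * v l)"

definition density_matrix :: "nat \<Rightarrow> (nat \<Rightarrow> nat \<Rightarrow> complex) \<Rightarrow> bool" where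
  "density_matrix d \<rho> \<longleftrightarrow>
     (\<forall>v. Im (cinner d v (matvec d \<rho> v)) = 0 \<and> Re (cinner d v (matvec d \<rho> v)) \<ge> 0)
     \<and> (\<Sum>k<d. \<rho> k k) = 1"

definition orthonormal_polys :: "(nat \<Rightarrow> real poly) \<Rightarrow> bool" where
  "orthonormal_polys p \<longleftrightarrow> (\<forall>n. degree (p n) = n) \<and>
     (\<exists>w::real \<Rightarrow> real. (\<forall>x. w x > 0) \<and>
        (\<forall>i j. has_bochner_integral lborel (\<lambda>x. poly (p j) x * poly (p i) x * w x)
                 (if i = j then 1 else 0)))"

definition std_basis_vec :: "nat \<Rightarrow> (nat \<Rightarrow> complex)" where
  "std_basis_vec j = (\<lambda>k. if k = j then 1 else 0)"

definition normalize_vec :: "nat \<Rightarrow> (nat \<Rightarrow> complex) \<Rightarrow> (nat \<Rightarrow> complex)" where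
  "normalize_vec d v = (\<lambda>k. v k / complex_of_real (cvnorm d v))"

definition vec_x :: "nat \<Rightarrow> (nat \<Rightarrow> real poly) \<Rightarrow> real \<Rightarrow> real \<Rightarrow> (nat \<Rightarrow> complex)" where
  "vec_x d p \<alpha> t = (\<lambda>k. if k < d then exp (\<i> * of_nat k * of_real \<alpha>) * of_real (poly (p k) t) else 0)"

definition vec_y :: "nat \<Rightarrow> (nat \<Rightarrow> real poly) \<Rightarrow> real \<Rightarrow> real \<Rightarrow> (nat \<Rightarrow> complex)" where
  "vec_y d p \<alpha> t = (\<lambda>k. if k < d - 1 then exp (\<i> * of_nat k * of_real \<alpha>) * of_real (poly (p k) t) else 0)"

definition basis0 :: "nat \<Rightarrow> (nat \<Rightarrow> complex) set" where
  "basis0 d = {std_basis_vec j | j. j < d}"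

definition basis1 :: "nat \<Rightarrow> (nat \<Rightarrow> real poly) \<Rightarrow> (nat \<Rightarrow> real) \<Rightarrow> (nat \<Rightarrow> complex) set" where
  "basis1 d p x = {normalize_vec d (vec_x d p 0 (x j)) | j. j < d}"

definition basis2 :: "nat \<Rightarrow> (nat \<Rightarrow> real poly) \<Rightarrow> real \<Rightarrow> (nat \<Rightarrow> real) \<Rightarrow> (nat \<Rightarrow> complex) set" where
  "basis2 d p \<alpha> x = {normalize_vec d (vec_x d p \<alpha> (x j)) | j. j < d}"

definition basis3 :: "nat \<Rightarrow> (nat \<Rightarrow> real poly) \<Rightarrow> (nat \<Rightarrow> real) \<Rightarrow> (nat \<Rightarrow> complex) set" where
  "basis3 d p y = {normalize_vec d (vec_y d p 0 (y j)) | j. j < d - 1}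
                  \<union> {normalize_vec d (std_basis_vec (d - 1))}"

definition basis4 :: "nat \<Rightarrow> (nat \<Rightarrow> real poly) \<Rightarrow> real \<Rightarrow> (nat \<Rightarrow> real) \<Rightarrow> (nat \<Rightarrow> complex) set" where
  "basis4 d p \<alpha> y = {normalize_vec d (vec_y d p \<alpha> (y j)) | j. j < d - 1}
                  \<union> {normalize_vec d (std_basis_vec (d - 1))}"

end

theory Submission
  imports Defs
begin

(*
  Let D = rho - |psi><psi|; the hypothesis says <v|D v> = 0 for every vector v of the five bases.
  For a in {0, alpha} put v_a(t) = (e^{ika} p_k(t))_k, so that the unnormalised basis vectors are
  v_0(x_j), v_alpha(x_j), and (since p_(d-1)(y_j) = 0) v_0(y_j), v_alpha(y_j), plus e_(d-1).
  Hence t |-> <v_a(t)|D v_a(t)>, a polynomial of degree at most 2d - 2, vanishes at the zeros of p_d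
  and of p_(d-1); consecutive orthonormal polynomials have no common zero, so these are 2d - 1
  points and the polynomial vanishes identically.
  Let m be the last index with psi_m ~= 0. Positivity of rho and D_kk = 0 (basis B^0) kill all rows
  and columns of D beyond m. Descending from n = m: once D vanishes on {n+1, ..., d-1}^2, the
  coefficient of t^(n+m) is (e^{i(m-n)a} D_nm + e^{i(n-m)a} D_mn) lc(p_n) lc(p_m); since D is
  hermitian and e^{i(m-n)alpha} is not real, the cases a = 0 and a = alpha give D_nm = 0.
  Then <u|rho u> = 0 for u = conj(psi_m) e_n - conj(psi_n) e_m, hence rho u = 0, which carries the
  vanishing of column m of D over to column n.
*)

section \<open>Quadratic forms and positive semidefinite matrices\<close>

definition qform :: "nat \<Rightarrow> (nat \<Rightarrow> nat \<Rightarrow> complex) \<Rightarrow> (nat \<Rightarrow> complex) \<Rightarrow> complex"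
  where
  "qform d A v = cinner d v (matvec d A v)"

definition psd :: "nat \<Rightarrow> (nat \<Rightarrow> nat \<Rightarrow> complex) \<Rightarrow> bool" where
  "psd d A \<longleftrightarrow> (\<forall>v. Im (qform d A v) = 0 \<and> Re (qform d A v) \<ge> 0)"

lemma density_matrix_imp_psd: "density_matrix d \<rho> \<Longrightarrow> psd d \<rho>"
  by (simp add: density_matrix_def psd_def qform_def)

lemma cinner_std_basis_vec: "l < d \<Longrightarrow> cinner d (std_basis_vec l) z = z l"
  unfolding cinner_def std_basis_vec_def
  by (simp add: if_distrib[of cnj] if_distrib[of "\<lambda>x. x * _"] cong: if_cong)

lemma matvec_std_basis_vec: "k < d \<Longrightarrow> matvec d A (std_basis_vec k) l = A l k"
  unfolding matvec_def std_basis_vec_def by (simp add: if_distrib[of "\<lambda>x. _ * x"] cong: if_cong)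

lemma matvec_lincomb:
  "matvec d A (\<lambda>i. a * u i + b * w i) j = a * matvec d A u j + b * matvec d A w j"
  by (simp add: matvec_def sum.distrib sum_distrib_left algebra_simps)

lemma cinner_lincomb_left:
  "cinner d (\<lambda>i. a * u i + b * w i) z = cnj a * cinner d u z + cnj b * cinner d w z"
  by (simp add: cinner_def sum.distrib sum_distrib_left algebra_simps)

lemma cinner_lincomb_right:
  "cinner d u (\<lambda>i. a * z i + b * w i) = a * cinner d u z + b * cinner d u w"
  by (simp add: cinner_def sum.distrib sum_distrib_left algebra_simps)

lemma qform_std_basis_vec: "k < d \<Longrightarrow> qform d A (std_basis_vec k) = A k k"
  by (simp add: qform_def cinner_std_basis_vec matvec_std_basis_vec)

lemma qform_two_point:
  assumes "k < d" "l < d"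
  shows "qform d A (\<lambda>i. a * std_basis_vec k i + b * std_basis_vec l i)
    = cnj a * a * A k k + cnj a * b * A k l + cnj b * a * A l k + cnj b * b * A l l"
  using assms unfolding qform_def
  by (simp add: matvec_lincomb cinner_lincomb_left cinner_lincomb_right cinner_std_basis_vec
      matvec_std_basis_vec algebra_simps)

lemma qform_add_scaled:
  "qform d A (\<lambda>i. u i + c * w i) = qform d A u + c * cinner d u (matvec d A w)
     + cnj c * cinner d w (matvec d A u) + cnj c * c * qform d A w"
  by (simp add: qform_def cinner_def matvec_def sum.distrib sum_distrib_left algebra_simps)

lemma qform_diff: "qform d (\<lambda>k l. A k l - B k l) v = qform d A v - qform d B v"
  by (simp add: qform_def cinner_def matvec_def sum_subtractf left_diff_distrib right_diff_distrib)

lemma qform_outer: "qform d (\<lambda>k l. \<psi> k * cnj (\<psi> l)) v = of_real ((cmod (cinner d v \<psi>))\<^sup>2)"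
proof -
  have "matvec d (\<lambda>k l. \<psi> k * cnj (\<psi> l)) v = (\<lambda>k. \<psi> k * cnj (cinner d v \<psi>))"
    by (simp add: matvec_def cinner_def sum_distrib_left algebra_simps)
  then have "qform d (\<lambda>k l. \<psi> k * cnj (\<psi> l)) v = cinner d v \<psi> * cnj (cinner d v \<psi>)"
    by (simp add: qform_def cinner_def sum_distrib_right algebra_simps)
  then show ?thesis
    by (metis complex_norm_square of_real_power)
qed

lemma qform_normalize_vec:
  "qform d A (normalize_vec d v) = qform d A v / (of_real (cvnorm d v))\<^sup>2"
proof -
  define c where "c = complex_of_real (cvnorm d v)"
  have "matvec d A (normalize_vec d v) = (\<lambda>k. matvec d A v k / c)"
    by (simp add: matvec_def normalize_vec_def c_def sum_divide_distrib)
  then have "qform d A (normalize_vec d v) = (\<Sum>k<d. cnj (v k) * matvec d A v k / (c * c))"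
    by (simp add: qform_def cinner_def normalize_vec_def c_def)
  then show ?thesis
    by (simp add: qform_def cinner_def sum_divide_distrib power2_eq_square c_def)
qed

lemma cvnorm_nonzero_imp_ex_nonzero:
  assumes "cvnorm d \<psi> \<noteq> 0"
  obtains k where "k < d" "\<psi> k \<noteq> 0"
proof -
  have "\<not> (\<forall>k<d. \<psi> k = 0)"
  proof
    assume "\<forall>k<d. \<psi> k = 0"
    then have "(\<Sum>k<d. (cmod (\<psi> k))\<^sup>2) = 0"
      by (intro sum.neutral) simp
    with assms show False
      by (simp add: cvnorm_def)
  qed
  then show thesis
    using that by blast
qed

lemma psd_hermitian:
  assumes "psd d A" "k < d" "l < d"
  shows "A k l = cnj (A l k)"
proof -
  have real: "Im (qform d A v) = 0" for v
    using assms(1) by (simp add: psd_def)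
  have "Im (A k k) = 0" "Im (A l l) = 0"
    using real[of "std_basis_vec k"] real[of "std_basis_vec l"] assms(2,3)
    by (simp_all add: qform_std_basis_vec)
  moreover have "Im (A k l + A l k) = 0" and "Re (A k l - A l k) = 0"
    using real[of "\<lambda>i. 1 * std_basis_vec k i + 1 * std_basis_vec l i"]
      real[of "\<lambda>i. 1 * std_basis_vec k i + \<i> * std_basis_vec l i"] \<open>Im (A k k) = 0\<close>
      \<open>Im (A l l) = 0\<close>
    unfolding qform_two_point[OF assms(2,3)] by simp_all
  ultimately show ?thesis
    by (simp add: complex_eq_iff)
qed

lemma linear_coeff_zero_if_quadratic_nonneg:
  fixes a b :: real
  assumes "\<And>t. a * t + b * t\<^sup>2 \<ge> 0" "b \<ge> 0"
  shows "a = 0"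
proof (rule ccontr)
  assume "a \<noteq> 0"
  define t where "t = - a / (b + 1)"
  have "b + 1 \<noteq> 0"
    using assms(2) by simp
  then have "a * t + b * t\<^sup>2 = (- a\<^sup>2 * (b + 1) + b * a\<^sup>2) / (b + 1)\<^sup>2"
    unfolding t_def power2_eq_square by (simp add: divide_simps)
  also have "\<dots> = - a\<^sup>2 / (b + 1)\<^sup>2"
    by (simp add: algebra_simps)
  also have "\<dots> < 0"
    using \<open>a \<noteq> 0\<close> assms(2) by (simp add: divide_neg_pos)
  finally show False
    using assms(1) by (simp add: not_le[symmetric])
qed

lemma psd_qform_zero_imp_matvec_zero:
  assumes "psd d A" "qform d A u = 0" "l < d"
  shows "matvec d A u l = 0"
proof -
  define X where "X = cinner d u (matvec d A (std_basis_vec l))"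
  define Y where "Y = cinner d (std_basis_vec l) (matvec d A u)"
  define B where "B = A l l"
  have qf: "qform d A (\<lambda>i. u i + c * std_basis_vec l i) = c * X + cnj c * Y + cnj c * c * B" for c
    using assms(2,3) by (simp add: qform_add_scaled qform_std_basis_vec X_def Y_def B_def)
  have real: "Im (c * X + cnj c * Y + cnj c * c * B) = 0"
    and nonneg: "Re (c * X + cnj c * Y + cnj c * c * B) \<ge> 0" for c
    using assms(1) unfolding psd_def qf[symmetric] by auto
  have B: "Im B = 0" "Re B \<ge> 0"
    using assms(1,3) by (simp_all add: psd_def B_def flip: qform_std_basis_vec)
  have "Re (X + Y) * t + Re B * t\<^sup>2 \<ge> 0" for t
    using nonneg[of "of_real t"] B by (simp add: power2_eq_square algebra_simps)
  then have "Re (X + Y) = 0"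
    using B by (intro linear_coeff_zero_if_quadratic_nonneg)
  moreover have "(Im Y - Im X) * t + Re B * t\<^sup>2 \<ge> 0" for t
    using nonneg[of "\<i> * of_real t"] B by (simp add: power2_eq_square algebra_simps)
  then have "Im Y - Im X = 0"
    using B by (intro linear_coeff_zero_if_quadratic_nonneg)
  moreover have "Im (X + Y) = 0" "Re X - Re Y = 0"
    using real[of 1] real[of \<i>] B by simp_all
  ultimately have "Y = 0"
    by (simp add: complex_eq_iff)
  then show ?thesis
    using assms(3) by (simp add: Y_def cinner_std_basis_vec)
qed

lemma psd_diag_zero_imp_col_zero:
  assumes "psd d A" "k < d" "l < d" "A k k = 0"
  shows "A l k = 0"
  using psd_qform_zero_imp_matvec_zero[OF assms(1) _ assms(3), of "std_basis_vec k"] assms(2,4)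
  by (simp add: qform_std_basis_vec matvec_std_basis_vec)

section \<open>Orthonormal polynomials\<close>

definition orthonormal_wrt :: "(nat \<Rightarrow> real poly) \<Rightarrow> (real \<Rightarrow> real) \<Rightarrow> bool" where
  "orthonormal_wrt p w \<longleftrightarrow> (\<forall>i j. has_bochner_integral lborel
     (\<lambda>x. poly (p j) x * poly (p i) x * w x) (if i = j then 1 else 0))"

lemma orthonormal_polysE:
  assumes "orthonormal_polys p"
  obtains w where "orthonormal_wrt p w" "\<And>k. degree (p k) = k"
  using assms unfolding orthonormal_polys_def orthonormal_wrt_def by blast

lemma orthonormal_wrt_nonzero:
  assumes "orthonormal_wrt p w"
  shows "p k \<noteq> 0"
proof
  assume "p k = 0"
  then have "has_bochner_integral lborel (\<lambda>x. poly (p k) x * poly (p k) x * w x) 0"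
    by (simp add: has_bochner_integral_zero)
  moreover have "has_bochner_integral lborel (\<lambda>x. poly (p k) x * poly (p k) x * w x) 1"
    using assms unfolding orthonormal_wrt_def by (metis (full_types))
  ultimately show False
    by (metis has_bochner_integral_integral_eq zero_neq_one)
qed

lemma expansion_in_degree_basis:
  fixes p :: "nat \<Rightarrow> 'a::field poly"
  assumes "\<And>k. degree (p k) = k" "\<And>k. p k \<noteq> 0" "degree q \<le> n"
  shows "\<exists>c. q = (\<Sum>k\<le>n. smult (c k) (p k))"
  using assms(3)
proof (induction n arbitrary: q)
  case 0
  define a b where "a = coeff (p 0) 0" and "b = coeff q 0"
  have "a \<noteq> 0"
    using assms(1,2)[of 0] unfolding a_def by (metis leading_coeff_0_iff)
  moreover have "p 0 = [:a:]" "q = [:b:]"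
    using assms(1)[of 0] 0 unfolding a_def b_def by (simp_all add: degree_0_id)
  ultimately have "q = smult (b / a) (p 0)"
    by simp
  then show ?case
    by (intro exI[of _ "\<lambda>_. b / a"]) simp
next
  case (Suc n)
  define s where "s = coeff q (Suc n) / lead_coeff (p (Suc n))"
  have lc: "lead_coeff (p (Suc n)) \<noteq> 0"
    using assms(2) by simp
  have "degree (q - smult s (p (Suc n))) \<le> n"
  proof (rule degree_le, intro allI impI)
    fix i assume "n < i"
    then show "coeff (q - smult s (p (Suc n))) i = 0"
      using Suc.prems assms(1)[of "Suc n"] lc
      by (cases "i = Suc n") (auto simp: s_def coeff_eq_0)
  qed
  then obtain c where c: "q - smult s (p (Suc n)) = (\<Sum>k\<le>n. smult (c k) (p k))"
    using Suc.IH by blast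
  have "q = (\<Sum>k\<le>Suc n. smult ((c(Suc n := s)) k) (p k))"
    using c by (simp add: algebra_simps)
  then show ?case
    by blast
qed

lemma has_bochner_integral_orthonormal_poly_mult:
  assumes "orthonormal_wrt p w" "\<And>k. degree (p k) = k" "degree q \<le> n"
  shows "has_bochner_integral lborel (\<lambda>x. poly (p n) x * poly q x * w x)
    (coeff q n / lead_coeff (p n))"
proof -
  have nz: "p k \<noteq> 0" for k
    using assms(1) by (rule orthonormal_wrt_nonzero)
  obtain c where c: "q = (\<Sum>k\<le>n. smult (c k) (p k))"
    using expansion_in_degree_basis[OF assms(2) nz assms(3)] by blast
  have "coeff q n = (\<Sum>k\<le>n. if k = n then c n * lead_coeff (p n) else 0)"
    unfolding c coeff_sum by (intro sum.cong) (auto simp: assms(2) coeff_eq_0)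
  then have coeff: "coeff q n / lead_coeff (p n) = c n"
    using nz by simp
  have "has_bochner_integral lborel
      (\<lambda>x. \<Sum>k\<le>n. c k * (poly (p n) x * poly (p k) x * w x)) (\<Sum>k\<le>n. c k * (if k = n then 1 else 0))"
    using assms(1) unfolding orthonormal_wrt_def
    by (intro has_bochner_integral_sum has_bochner_integral_mult_right) metis
  moreover have "(\<lambda>x. \<Sum>k\<le>n. c k * (poly (p n) x * poly (p k) x * w x))
      = (\<lambda>x. poly (p n) x * poly q x * w x)"
    unfolding c by (simp add: poly_sum sum_distrib_left sum_distrib_right algebra_simps)
  ultimately show ?thesis
    by (simp add: coeff if_distrib[of "\<lambda>y. _ * y"] cong: if_cong)
qed

lemma orthonormal_polys_no_common_zero:
  assumes "orthonormal_polys p" "poly (p (Suc n)) z = 0"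
  shows "poly (p n) z \<noteq> 0"
proof
  assume "poly (p n) z = 0"
  obtain w where w: "orthonormal_wrt p w" and deg: "\<And>k. degree (p k) = k"
    using assms(1) by (metis orthonormal_polysE)
  have nz: "p k \<noteq> 0" for k
    using w by (rule orthonormal_wrt_nonzero)
  obtain h where h: "p (Suc n) = [:-z, 1:] * h"
    using assms(2) by (metis poly_eq_0_iff_dvd dvdE)
  obtain g where g: "p n = [:-z, 1:] * g"
    using \<open>poly (p n) z = 0\<close> by (metis poly_eq_0_iff_dvd dvdE)
  have "h \<noteq> 0" "g \<noteq> 0"
    using h g nz by auto
  then have "degree (p (Suc n)) = degree [:-z, 1:] + degree h"
    and "degree (p n) = degree [:-z, 1:] + degree g"
    unfolding h g by (simp_all only: degree_mult_eq pCons_eq_0_iff one_neq_zero simp_thms)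
  then have dh: "degree h = n" and dg: "degree g < Suc n"
    using deg[of n] deg[of "Suc n"] by simp_all
  have same: "(\<lambda>x. poly (p (Suc n)) x * poly g x * w x) = (\<lambda>x. poly (p n) x * poly h x * w x)"
    by (simp add: h g algebra_simps)
  have "has_bochner_integral lborel (\<lambda>x. poly (p n) x * poly h x * w x) 0"
    using has_bochner_integral_orthonormal_poly_mult[OF w deg, of g "Suc n"] dg
    by (simp add: same coeff_eq_0)
  moreover have "has_bochner_integral lborel (\<lambda>x. poly (p n) x * poly h x * w x)
      (lead_coeff h / lead_coeff (p n))"
    using has_bochner_integral_orthonormal_poly_mult[OF w deg, of h n] dh by simp
  ultimately have "lead_coeff h / lead_coeff (p n) = 0"
    by (metis has_bochner_integral_integral_eq)
  then show False
    using \<open>h \<noteq> 0\<close> nz by simp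
qed

lemma orthonormal_polys_poly_0_nonzero:
  assumes "orthonormal_polys p"
  shows "poly (p 0) t \<noteq> 0"
proof -
  obtain w where w: "orthonormal_wrt p w" and deg: "\<And>k. degree (p k) = k"
    using assms by (metis orthonormal_polysE)
  have "p 0 \<noteq> 0"
    using w by (rule orthonormal_wrt_nonzero)
  then show ?thesis
    using deg[of 0] poly_zero by blast
qed

lemma card_zeros_consecutive_orthonormal_polys:
  assumes "orthonormal_polys p" "d \<ge> 1"
    and "inj_on x {..<d}" "x ` {..<d} = {t. poly (p d) t = 0}"
    and "inj_on y {..<d - 1}" "y ` {..<d - 1} = {t. poly (p (d - 1)) t = 0}"
  shows "card (x ` {..<d} \<union> y ` {..<d - 1}) = 2 * d - 1"
proof -
  have "x ` {..<d} \<inter> y ` {..<d - 1} = {}"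
    using orthonormal_polys_no_common_zero[OF assms(1), of "d - 1"] assms(2,4,6) by auto
  then have "card (x ` {..<d} \<union> y ` {..<d - 1}) = card (x ` {..<d}) + card (y ` {..<d - 1})"
    by (intro card_Un_disjoint) auto
  also have "\<dots> = d + (d - 1)"
    using assms(3,5) by (simp add: card_image)
  finally show ?thesis
    using assms(2) by simp
qed

lemma vec_x_cis: "vec_x d p a t k = (if k < d then cis (real k * a) * of_real (poly (p k) t) else 0)"
  by (simp add: vec_x_def cis_conv_exp mult.assoc)

lemma vec_y_eq_vec_x:
  assumes "poly (p (d - 1)) t = 0"
  shows "vec_y d p a t = vec_x d p a t"
proof
  fix k
  show "vec_y d p a t k = vec_x d p a t k"
    using assms by (cases "k = d - 1") (auto simp: vec_y_def vec_x_def)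
qed

lemma cvnorm_vec_x_nonzero:
  assumes "poly (p 0) t \<noteq> 0" "d \<ge> 1"
  shows "cvnorm d (vec_x d p a t) \<noteq> 0"
proof -
  have "0 < (cmod (vec_x d p a t 0))\<^sup>2"
    using assms by (simp add: vec_x_def)
  also have "\<dots> \<le> (\<Sum>k<d. (cmod (vec_x d p a t k))\<^sup>2)"
    using assms(2) by (intro member_le_sum) auto
  finally show ?thesis
    by (simp add: cvnorm_def)
qed

lemma basis1_eq_basis2: "basis1 d p x = basis2 d p 0 x"
  by (simp add: basis1_def basis2_def)

lemma basis3_eq_basis4: "basis3 d p y = basis4 d p 0 y"
  by (simp add: basis3_def basis4_def)

lemma qform_vec_x_eq_0_at_zeros:
  assumes "orthonormal_polys p" "d \<ge> 1" "y ` {..<d - 1} = {t. poly (p (d - 1)) t = 0}"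
    and data: "\<And>v. v \<in> basis2 d p a x \<union> basis4 d p a y \<Longrightarrow> qform d A v = 0"
    and "t \<in> x ` {..<d} \<union> y ` {..<d - 1}"
  shows "qform d A (vec_x d p a t) = 0"
proof -
  have "normalize_vec d (vec_x d p a t) \<in> basis2 d p a x \<union> basis4 d p a y"
    using assms(5)
  proof
    assume "t \<in> x ` {..<d}"
    then obtain j where "j < d" "t = x j"
      by auto
    then show ?thesis
      unfolding basis2_def by blast
  next
    assume "t \<in> y ` {..<d - 1}"
    then obtain j where j: "j < d - 1" "t = y j"
      by auto
    then have "poly (p (d - 1)) t = 0"
      using assms(3) by auto
    then have "vec_x d p a t = vec_y d p a t"
      by (rule vec_y_eq_vec_x[symmetric])
    then show ?thesis
      using j unfolding basis4_def by auto
  qed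
  then have "qform d A (normalize_vec d (vec_x d p a t)) = 0"
    by (rule data)
  then have "qform d A (vec_x d p a t) / (of_real (cvnorm d (vec_x d p a t)))\<^sup>2 = 0"
    by (simp only: qform_normalize_vec)
  then show ?thesis
    using cvnorm_vec_x_nonzero[where p = p, OF orthonormal_polys_poly_0_nonzero[OF assms(1)] assms(2)]
    by simp
qed

section \<open>Quadratic forms along the polynomial curves\<close>

definition qform_poly ::
    "nat \<Rightarrow> (nat \<Rightarrow> real poly) \<Rightarrow> real \<Rightarrow> (nat \<Rightarrow> nat \<Rightarrow> complex) \<Rightarrow> complex poly"
  where
  "qform_poly d p a A = (\<Sum>k<d. \<Sum>l<d.
     smult (cnj (cis (real k * a)) * A k l * cis (real l * a)) (map_poly of_real (p k * p l)))"

lemma poly_qform_poly: "poly (qform_poly d p a A) (of_real t) = qform d A (vec_x d p a t)"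
proof -
  have "poly (map_poly of_real q) (of_real t) = (of_real (poly q t) :: complex)" for q
    by (induction q) (auto simp: map_poly_pCons)
  then have "poly (qform_poly d p a A) (of_real t) = (\<Sum>k<d. \<Sum>l<d.
      cnj (cis (real k * a) * of_real (poly (p k) t)) * (A k l * (cis (real l * a) * of_real (poly (p l) t))))"
    by (simp add: qform_poly_def poly_sum mult_ac)
  then show ?thesis
    by (simp add: qform_def cinner_def matvec_def vec_x_cis sum_distrib_left)
qed

lemma coeff_qform_poly: "coeff (qform_poly d p a A) N = (\<Sum>k<d. \<Sum>l<d.
    cnj (cis (real k * a)) * A k l * cis (real l * a) * of_real (coeff (p k * p l) N))"
  by (simp add: qform_poly_def coeff_sum coeff_map_poly)

lemma degree_qform_poly_le:
  assumes "\<And>k. degree (p k) = k"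
  shows "degree (qform_poly d p a A) \<le> 2 * d - 2"
proof (rule degree_le, intro allI impI)
  fix N assume N: "2 * d - 2 < N"
  have "coeff (p k * p l) N = 0" if "k < d" "l < d" for k l
    using degree_mult_le[of "p k" "p l"] assms[of k] assms[of l] that N by (simp add: coeff_eq_0)
  then show "coeff (qform_poly d p a A) N = 0"
    by (simp add: coeff_qform_poly)
qed

lemma qform_poly_eq_0:
  assumes "\<And>k. degree (p k) = k" "card S \<ge> 2 * d - 1"
    and "\<And>t. t \<in> S \<Longrightarrow> qform d A (vec_x d p a t) = 0"
  shows "qform_poly d p a A = 0"
proof (rule ccontr)
  assume Q: "qform_poly d p a A \<noteq> 0"
  then have "d \<ge> 1"
    by (cases d) (simp_all add: qform_poly_def)
  have "of_real ` S \<subseteq> {z. poly (qform_poly d p a A) z = 0}"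
    using assms(3) by (auto simp: poly_qform_poly)
  then have "card (of_real ` S :: complex set) \<le> card {z. poly (qform_poly d p a A) z = 0}"
    by (intro card_mono poly_roots_finite Q)
  also have "\<dots> \<le> 2 * d - 2"
    using card_poly_roots_bound[OF Q] degree_qform_poly_le[OF assms(1)] by (rule le_trans)
  finally show False
    using assms(2) \<open>d \<ge> 1\<close> by (simp add: card_image inj_on_def)
qed

lemma coeff_qform_poly_corner:
  assumes deg: "\<And>k. degree (p k) = k" and "n < m" "m < d"
    and supp: "\<And>k l. k < d \<Longrightarrow> l < d \<Longrightarrow> A k l \<noteq> 0 \<Longrightarrow>
      k \<le> m \<and> l \<le> m \<and> (k \<le> n \<or> l \<le> n)"
  shows "coeff (qform_poly d p a A) (n + m)
    = (cis ((real m - real n) * a) * A n m + cis ((real n - real m) * a) * A m n)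
      * of_real (lead_coeff (p n) * lead_coeff (p m))"
proof -
  define T where "T k l = cnj (cis (real k * a)) * A k l * cis (real l * a)
    * of_real (coeff (p k * p l) (n + m))" for k l
  have top: "coeff (p k * p l) (k + l) = lead_coeff (p k) * lead_coeff (p l)" for k l
    using coeff_mult_degree_sum[of "p k" "p l"] deg by simp
  have phase: "cnj (cis (real k * a)) * cis (real l * a) = cis ((real l - real k) * a)" for k l
    by (simp add: cis_cnj cis_mult left_diff_distrib)
  have T: "T k l = cis ((real l - real k) * a) * A k l * of_real (lead_coeff (p k) * lead_coeff (p l))"
    if "k + l = n + m" for k l
  proof -
    have "T k l = (cnj (cis (real k * a)) * cis (real l * a)) * A k l
        * of_real (lead_coeff (p k) * lead_coeff (p l))"
      using top[of k l] that by (simp add: T_def mult_ac)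
    then show ?thesis
      by (simp only: phase)
  qed
  have zero: "T k l = 0" if "k < d" "l < d" "(k, l) \<notin> {(n, m), (m, n)}" for k l
  proof (cases "A k l = 0")
    case False
    then have "k + l < n + m"
      using supp[OF that(1,2)] that(3) by auto
    then have "coeff (p k * p l) (n + m) = 0"
      using degree_mult_le[of "p k" "p l"] deg[of k] deg[of l] by (simp add: coeff_eq_0)
    then show ?thesis
      by (simp add: T_def)
  qed (simp add: T_def)
  have "coeff (qform_poly d p a A) (n + m) = (\<Sum>(k, l) \<in> {..<d} \<times> {..<d}. T k l)"
    by (simp add: coeff_qform_poly T_def sum.cartesian_product)
  also have "\<dots> = (\<Sum>(k, l) \<in> {(n, m), (m, n)}. T k l)"
    using zero assms(2,3) by (intro sum.mono_neutral_right) auto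
  also have "\<dots> = T n m + T m n"
    using assms(2) by simp
  also have "\<dots> = (cis ((real m - real n) * a) * A n m + cis ((real n - real m) * a) * A m n)
      * of_real (lead_coeff (p n) * lead_coeff (p m))"
    using T[of n m] T[of m n] by (simp add: ring_distribs mult_ac)
  finally show ?thesis .
qed

lemma exp_imaginary_in_Reals_iff:
  "exp (\<i> * of_nat j * of_real \<alpha>) \<in> \<real> \<longleftrightarrow> sin (real j * \<alpha>) = 0"
proof -
  have "exp (\<i> * of_nat j * of_real \<alpha>) = cis (real j * \<alpha>)"
    by (simp add: cis_conv_exp mult.assoc)
  then show ?thesis
    by (simp add: complex_is_Real_iff)
qed

lemma complex_eq_0_if_Re_rotations_eq_0:
  assumes "Re z = 0" "Re (cis \<theta> * z) = 0" "sin \<theta> \<noteq> 0"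
  shows "z = 0"
  using assms by (simp add: complex_eq_iff)

section \<open>Deviation from a pure state\<close>

definition pure_deviation ::
    "(nat \<Rightarrow> nat \<Rightarrow> complex) \<Rightarrow> (nat \<Rightarrow> complex) \<Rightarrow> nat \<Rightarrow> nat \<Rightarrow> complex"
  where
  "pure_deviation \<rho> \<psi> k l = \<rho> k l - \<psi> k * cnj (\<psi> l)"

lemma pure_deviation_hermitian:
  "psd d \<rho> \<Longrightarrow> k < d \<Longrightarrow> l < d \<Longrightarrow>
    pure_deviation \<rho> \<psi> k l = cnj (pure_deviation \<rho> \<psi> l k)"
  by (simp add: pure_deviation_def psd_hermitian[of d \<rho> k l])

lemma qform_pure_deviation_eq_0_iff:
  "qform d (pure_deviation \<rho> \<psi>) v = 0 \<longleftrightarrow> of_real ((cmod (cinner d v \<psi>))\<^sup>2) = qform d \<rho> v"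
  using qform_diff[of d \<rho> "\<lambda>k l. \<psi> k * cnj (\<psi> l)" v]
  by (auto simp: pure_deviation_def[abs_def] qform_outer)

lemma psd_pure_deviation_column_transfer:
  assumes "psd d \<rho>" "n < d" "m < d" "l < d" "\<psi> m \<noteq> 0"
    and "pure_deviation \<rho> \<psi> n n = 0" "pure_deviation \<rho> \<psi> m m = 0" "pure_deviation \<rho> \<psi> n m = 0"
    and "pure_deviation \<rho> \<psi> l m = 0"
  shows "pure_deviation \<rho> \<psi> l n = 0"
proof -
  define u where "u i = cnj (\<psi> m) * std_basis_vec n i + (- cnj (\<psi> n)) * std_basis_vec m i" for i
  have "\<rho> m n = \<psi> m * cnj (\<psi> n)"
    using pure_deviation_hermitian[OF assms(1,3,2), of \<psi>] assms(8)
    by (simp add: pure_deviation_def)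
  then have "qform d \<rho> u = 0"
    using assms(6-8) unfolding u_def qform_two_point[OF assms(2,3)]
    by (simp add: pure_deviation_def algebra_simps)
  with assms(1,4) have "matvec d \<rho> u l = 0"
    by (intro psd_qform_zero_imp_matvec_zero)
  then have "cnj (\<psi> m) * \<rho> l n - cnj (\<psi> n) * \<rho> l m = 0"
    using assms(2,3) unfolding u_def matvec_lincomb by (simp add: matvec_std_basis_vec)
  then have "cnj (\<psi> m) * pure_deviation \<rho> \<psi> l n = 0"
    using assms(9) by (simp add: pure_deviation_def algebra_simps)
  then show ?thesis
    using assms(5) by simp
qed

context
  fixes d :: nat and p :: "nat \<Rightarrow> real poly" and \<alpha> :: real
    and \<rho> :: "nat \<Rightarrow> nat \<Rightarrow> complex" and \<psi> :: "nat \<Rightarrow> complex"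
  assumes deg: "\<And>k. degree (p k) = k" and nonzero: "\<And>k. p k \<noteq> 0"
    and psd: "psd d \<rho>"
    and diag: "\<And>k. k < d \<Longrightarrow> pure_deviation \<rho> \<psi> k k = 0"
    and qform_poly_0: "qform_poly d p 0 (pure_deviation \<rho> \<psi>) = 0"
    and qform_poly_\<alpha>: "qform_poly d p \<alpha> (pure_deviation \<rho> \<psi>) = 0"
    and sin_nonzero: "\<And>j. 0 < j \<Longrightarrow> j < d \<Longrightarrow> sin (real j * \<alpha>) \<noteq> 0"
begin

lemma pure_deviation_eq_0_off_support:
  assumes "\<psi> k = 0" "k < d" "l < d"
  shows "pure_deviation \<rho> \<psi> l k = 0" and "pure_deviation \<rho> \<psi> k l = 0"
proof -
  have "\<rho> k k = 0"
    using diag[OF assms(2)] assms(1) by (simp add: pure_deviation_def)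
  then have "\<rho> l k = 0"
    by (rule psd_diag_zero_imp_col_zero[OF psd assms(2,3)])
  then show "pure_deviation \<rho> \<psi> l k = 0"
    using assms(1) by (simp add: pure_deviation_def)
  then show "pure_deviation \<rho> \<psi> k l = 0"
    using pure_deviation_hermitian[OF psd assms(2,3)] by simp
qed

lemma pure_deviation_corner_eq_0:
  assumes "n < m" "m < d"
    and supp: "\<And>k l. k < d \<Longrightarrow> l < d \<Longrightarrow> pure_deviation \<rho> \<psi> k l \<noteq> 0 \<Longrightarrow>
      k \<le> m \<and> l \<le> m \<and> (k \<le> n \<or> l \<le> n)"
  shows "pure_deviation \<rho> \<psi> n m = 0"
proof -
  define z where "z = pure_deviation \<rho> \<psi> n m"
  have herm: "pure_deviation \<rho> \<psi> m n = cnj z"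
    using pure_deviation_hermitian[OF psd, of m n] assms(1,2) by (simp add: z_def)
  have lead: "lead_coeff (p n) * lead_coeff (p m) \<noteq> 0"
    using nonzero by simp
  have Re_rot: "Re (cis ((real m - real n) * a) * z) = 0"
    if "qform_poly d p a (pure_deviation \<rho> \<psi>) = 0" for a
  proof -
    have "(cis ((real m - real n) * a) * z + cis ((real n - real m) * a) * cnj z)
        * of_real (lead_coeff (p n) * lead_coeff (p m)) = 0"
      using coeff_qform_poly_corner[where A = "pure_deviation \<rho> \<psi>" and a = a, OF deg assms] that
      by (simp add: herm z_def)
    moreover have "cis ((real n - real m) * a) = cnj (cis ((real m - real n) * a))"
      unfolding cis_cnj by (simp add: algebra_simps)
    ultimately have "cis ((real m - real n) * a) * z + cnj (cis ((real m - real n) * a) * z) = 0"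
      using lead by simp
    then show ?thesis
      by (simp add: complex_eq_iff mult.commute)
  qed
  have "z = 0"
  proof (rule complex_eq_0_if_Re_rotations_eq_0)
    show "Re z = 0"
      using Re_rot[OF qform_poly_0] by simp
    show "Re (cis ((real m - real n) * \<alpha>) * z) = 0"
      using Re_rot[OF qform_poly_\<alpha>] .
    show "sin ((real m - real n) * \<alpha>) \<noteq> 0"
      using sin_nonzero[of "m - n"] assms(1,2) by (simp add: of_nat_diff)
  qed
  then show ?thesis
    by (simp add: z_def)
qed

lemma pure_deviation_vanishing_step:
  assumes "n < m" "m < d" "\<psi> m \<noteq> 0" and beyond: "\<And>k. k < d \<Longrightarrow> m < k \<Longrightarrow> \<psi> k = 0"
    and IH: "\<And>k l. k < d \<Longrightarrow> l < d \<Longrightarrow> Suc n \<le> k \<Longrightarrow> Suc n \<le> l \<Longrightarrow>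
      pure_deviation \<rho> \<psi> k l = 0"
    and "k < d" "l < d" "n \<le> k" "n \<le> l"
  shows "pure_deviation \<rho> \<psi> k l = 0"
proof -
  have off: "pure_deviation \<rho> \<psi> i j = 0" if "i < d" "j < d" "m < i \<or> m < j" for i j
    using that beyond pure_deviation_eq_0_off_support by blast
  have "pure_deviation \<rho> \<psi> n m = 0"
  proof (rule pure_deviation_corner_eq_0[OF assms(1,2)])
    show "i \<le> m \<and> j \<le> m \<and> (i \<le> n \<or> j \<le> n)"
      if "i < d" "j < d" "pure_deviation \<rho> \<psi> i j \<noteq> 0" for i j
      using that off IH by (meson not_less_eq_eq not_le)
  qed
  have col: "pure_deviation \<rho> \<psi> i n = 0" if "i < d" "n \<le> i" for i
  proof -
    have "pure_deviation \<rho> \<psi> i m = 0"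
      using \<open>pure_deviation \<rho> \<psi> n m = 0\<close> IH[OF that(1) assms(2)] that(2) assms(1)
      by (cases "i = n") simp_all
    moreover have "n < d"
      using assms(1,2) by simp
    ultimately show ?thesis
      using psd_pure_deviation_column_transfer[where \<psi> = \<psi>, OF psd \<open>n < d\<close> assms(2) that(1) assms(3)]
        diag[of n] diag[of m] assms(2) \<open>pure_deviation \<rho> \<psi> n m = 0\<close> by blast
  qed
  consider "l = n" | "k = n" | "Suc n \<le> k" "Suc n \<le> l"
    using assms(8,9) by linarith
  then show ?thesis
  proof cases
    case 1
    then show ?thesis
      using col assms(6,8) by simp
  next
    case 2
    then show ?thesis
      using col[OF assms(7,9)] pure_deviation_hermitian[OF psd assms(6,7), of \<psi>] by simp
  next
    case 3
    then show ?thesis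
      using IH assms(6,7) by simp
  qed
qed

lemma pure_deviation_eq_0:
  assumes "\<psi> k0 \<noteq> 0" "k0 < d" "k < d" "l < d"
  shows "pure_deviation \<rho> \<psi> k l = 0"
proof -
  define M where "M = {k. k < d \<and> \<psi> k \<noteq> 0}"
  define m where "m = Max M"
  have "finite M" "k0 \<in> M"
    using assms(1,2) by (simp_all add: M_def)
  then have "m \<in> M"
    unfolding m_def by (intro Max_in) auto
  then have m: "m < d" "\<psi> m \<noteq> 0"
    by (simp_all add: M_def)
  have beyond: "\<psi> k = 0" if "k < d" "m < k" for k
  proof (rule ccontr)
    assume "\<psi> k \<noteq> 0"
    then have "k \<le> m"
      using Max_ge[OF \<open>finite M\<close>, of k] that(1) by (simp add: M_def m_def)
    then show False
      using that(2) by simp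
  qed
  define Z where
    "Z n \<longleftrightarrow> (\<forall>k<d. \<forall>l<d. n \<le> k \<longrightarrow> n \<le> l \<longrightarrow> pure_deviation \<rho> \<psi> k l = 0)" for n
  have "Z n" if "n \<le> m" for n
    using that
  proof (induction n rule: inc_induct)
    case base
    show ?case
      unfolding Z_def using beyond diag pure_deviation_eq_0_off_support
      by (metis le_neq_implies_less)
  next
    case (step n)
    then show ?case
      unfolding Z_def using pure_deviation_vanishing_step[OF _ m beyond] by blast
  qed
  then have "Z 0"
    by simp
  then show ?thesis
    using assms(3,4) by (simp add: Z_def)
qed

end

theorem theorem1:
  fixes d :: nat and p :: "nat \<Rightarrow> real poly" and x y :: "nat \<Rightarrow> real" and \<alpha> :: real
    and \<psi> :: "nat \<Rightarrow> complex" and \<rho> :: "nat \<Rightarrow> nat \<Rightarrow> complex"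
  assumes "d \<ge> 1"
    and "orthonormal_polys p"
    and "inj_on x {..<d}" and "x ` {..<d} = {t. poly (p d) t = 0}"
    and "inj_on y {..<d - 1}" and "y ` {..<d - 1} = {t. poly (p (d - 1)) t = 0}"
    and "\<forall>j\<in>{1..d - 1}. exp (\<i> * of_nat j * of_real \<alpha>) \<notin> \<real>"
    and "cvnorm d \<psi> = 1"
    and "density_matrix d \<rho>"
    and "\<forall>v \<in> basis0 d \<union> basis1 d p x \<union> basis2 d p \<alpha> x \<union> basis3 d p y \<union> basis4 d p \<alpha> y.
           complex_of_real ((cmod (cinner d v \<psi>))\<^sup>2) = cinner d v (matvec d \<rho> v)"
  shows "\<forall>k<d. \<forall>l<d. \<rho> k l = \<psi> k * cnj (\<psi> l)"
proof -
  obtain w where w: "orthonormal_wrt p w" and deg: "\<And>k. degree (p k) = k"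
    using assms(2) by (metis orthonormal_polysE)
  have data: "qform d (pure_deviation \<rho> \<psi>) v = 0"
    if "v \<in> basis0 d \<union> basis1 d p x \<union> basis2 d p \<alpha> x \<union> basis3 d p y \<union> basis4 d p \<alpha> y" for v
    unfolding qform_pure_deviation_eq_0_iff using assms(10) that by (simp add: qform_def)
  have diag: "pure_deviation \<rho> \<psi> k k = 0" if "k < d" for k
    using data[of "std_basis_vec k"] that by (auto simp: basis0_def qform_std_basis_vec)
  have qform_poly_vanishes: "qform_poly d p a (pure_deviation \<rho> \<psi>) = 0" if "a = 0 \<or> a = \<alpha>" for a
  proof (rule qform_poly_eq_0[OF deg])
    show "card (x ` {..<d} \<union> y ` {..<d - 1}) \<ge> 2 * d - 1"
      using card_zeros_consecutive_orthonormal_polys[OF assms(2,1,3-6)] by simp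
    show "qform d (pure_deviation \<rho> \<psi>) (vec_x d p a t) = 0" if "t \<in> x ` {..<d} \<union> y ` {..<d - 1}" for t
      using qform_vec_x_eq_0_at_zeros[OF assms(2,1,6) data that] \<open>a = 0 \<or> a = \<alpha>\<close>
      by (auto simp: basis1_eq_basis2 basis3_eq_basis4)
  qed
  have sin_nonzero: "sin (real j * \<alpha>) \<noteq> 0" if "0 < j" "j < d" for j
    using assms(7) that by (auto simp: exp_imaginary_in_Reals_iff)
  obtain k0 where "k0 < d" "\<psi> k0 \<noteq> 0"
    using cvnorm_nonzero_imp_ex_nonzero[of d \<psi>] assms(8) by auto
  then show ?thesis
    using pure_deviation_eq_0[OF deg orthonormal_wrt_nonzero[OF w] density_matrix_imp_psd[OF assms(9)]
        diag qform_poly_vanishes[OF disjI1[OF refl]] qform_poly_vanishes[OF disjI2[OF refl]] sin_nonzero]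
    by (simp add: pure_deviation_def)
qed

end
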